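(* Let $S\subset\mathbb T^d$ be closed and $S^c=\overline{\mathbb T^d\setminus S}$. Suppose there exist $p_1,\dots,p_M\in\mathbb T^d$ and $r\in(0,r_{\max})$ such that (a) $B_{2r}(p_i)\cap B_{2r}(p_j)=\emptyset$ for all $i\ne j$, and (b) $S^c\subset\bigcup_iB_r(p_i)$. Then for $1\le k\le d-1$ the map $i_*:H_k(S)\to H_k(\mathbb T^d)$ induced by inclusion is surjective.
   Context: $\mathbb T^d=\mathbb R^d/\mathbb Z^d$ is the flat torus with the toroidal metric, $d\ge2$; $B_r(p)$ denotes the closed metric ball. $r_{\max}>0$ is a fixed small constant such that every ball of radius $\le 2r_{\max}$ in $\mathbb T^d$ is isometric to a Euclidean ball (in particular balls and annuli of radii below it are contractible, respectively homotopy equivalent to $\mathbb S^{d-1}$). Homology is singular homology with field coefficients. *)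

theory Defs
  imports "HOL-Analysis.Analysis" "HOL-Homology.Homology"
begin

text \<open>Flat torus R^d / Z^d, modelled on the fundamental domain [0,1)^d inside real^'n,
  with the toroidal (quotient) metric.\<close>

definition torus_carrier :: "(real^'n) set" where
  "torus_carrier = {x. \<forall>i. 0 \<le> x$i \<and> x$i < 1}"

definition torus_dist :: "real^'n \<Rightarrow> real^'n \<Rightarrow> real" where
  "torus_dist x y = Inf ((\<lambda>z. norm (x - y - z)) ` {z. \<forall>i. z$i \<in> \<int>})"

definition torus_top :: "(real^'n) topology" where
  "torus_top = Metric_space.mtopology torus_carrier torus_dist"

definition torus_cball :: "real^'n \<Rightarrow> real \<Rightarrow> (real^'n) set" where
  "torus_cball p r = Metric_space.mcball torus_carrier torus_dist p r"

end

theory Submission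
  imports Defs
begin

text \<open>Remove the open balls of radius \<open>3r/2\<close> around the \<open>p\<^sub>i\<close> one at a time; what is left lies
  inside \<open>S\<close>. Each ball sits well inside the closed ball \<open>B\<close> of radius \<open>2r\<close>, which the earlier removals
  have not touched, so by excision the relative group of the pair (current space, ball removed) is that of
  (\<open>B\<close>, annulus). Since \<open>B\<close> is contractible this is the reduced homology in degree \<open>k - 1\<close> of the annulus,
  i.e. of \<open>S\<^sup>d\<^sup>-\<^sup>1\<close>, which vanishes for \<open>k \<noteq> d\<close>; exactness then makes each inclusion surjective on \<open>H\<^sub>k\<close>.
  Balls of radius below 1/4 in the torus are isometric to Euclidean ones via \<open>v \<mapsto> frac (p + v)\<close>.\<close>

section \<open>Surjectivity of inclusions on homology\<close>

definition inclusion_surjective_on_homology :: "int \<Rightarrow> 'a topology \<Rightarrow> 'a set \<Rightarrow> bool" where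
  "inclusion_surjective_on_homology k X S \<longleftrightarrow>
     hom_induced k (subtopology X S) {} X {} id ` carrier (homology_group k (subtopology X S))
       = carrier (homology_group k X)"

lemma inclusion_surjective_on_homology_if_trivial_relative:
  assumes "trivial_group (relative_homology_group k X S)"
  shows "inclusion_surjective_on_homology k X S"
proof -
  have "hom_induced k (subtopology X S) {} X {} id ` carrier (homology_group k (subtopology X S))
      = kernel (homology_group k X) (relative_homology_group k X S) (hom_induced k X {} X S id)"
    using homology_exactness_axiom_3[of k X S] by simp
  also have "\<dots> = carrier (homology_group k X)"
    using assms hom_induced_hom[of k X "{}" X S id]
    by (auto simp: kernel_def trivial_group_def hom_def Pi_def)
  finally show ?thesis
    by (simp add: inclusion_surjective_on_homology_def)
qed

lemma hom_induced_inclusion_factor: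
  assumes "S \<subseteq> T"
  shows "hom_induced k (subtopology X S) {} X {} id
       = hom_induced k (subtopology X T) {} X {} id \<circ> hom_induced k (subtopology X S) {} (subtopology X T) {} id"
proof -
  have "continuous_map (subtopology X S) (subtopology X T) id"
    using assms by (auto simp: continuous_map_in_subtopology intro: continuous_map_from_subtopology)
  from hom_induced_compose_empty[OF this continuous_map_from_subtopology[OF continuous_map_id]]
  show ?thesis
    by simp
qed

lemma inclusion_surjective_on_homology_trans:
  assumes "S \<subseteq> T" "inclusion_surjective_on_homology k (subtopology X T) S"
    "inclusion_surjective_on_homology k X T"
  shows "inclusion_surjective_on_homology k X S"
proof -
  have "subtopology (subtopology X T) S = subtopology X S"
    using assms(1) by (simp add: subtopology_subtopology Int_absorb1)
  moreover have "hom_induced k (subtopology X S) {} X {} id ` carrier (homology_group k (subtopology X S))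
      = hom_induced k (subtopology X T) {} X {} id `
          hom_induced k (subtopology X S) {} (subtopology X T) {} id ` carrier (homology_group k (subtopology X S))"
    by (simp only: hom_induced_inclusion_factor[OF assms(1)] image_comp)
  ultimately show ?thesis
    using assms(2,3) by (simp add: inclusion_surjective_on_homology_def)
qed

lemma inclusion_surjective_on_homology_mono:
  assumes "S \<subseteq> T" "inclusion_surjective_on_homology k X S"
  shows "inclusion_surjective_on_homology k X T"
  unfolding inclusion_surjective_on_homology_def
proof
  have "carrier (homology_group k X)
      = hom_induced k (subtopology X T) {} X {} id `
          hom_induced k (subtopology X S) {} (subtopology X T) {} id ` carrier (homology_group k (subtopology X S))"
    using assms(2) unfolding inclusion_surjective_on_homology_def
    by (simp only: hom_induced_inclusion_factor[OF assms(1)] image_comp)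
  also have "\<dots> \<subseteq> hom_induced k (subtopology X T) {} X {} id ` carrier (homology_group k (subtopology X T))"
    by (intro image_mono hom_carrier hom_induced_hom)
  finally show "carrier (homology_group k X) \<subseteq> \<dots>" .
qed (intro hom_carrier hom_induced_hom)

lemma inclusion_surjective_on_homology_topspace: "inclusion_surjective_on_homology k X (topspace X)"
  by (rule inclusion_surjective_on_homology_if_trivial_relative trivial_relative_homology_group_topspace)+

lemma inclusion_surjective_on_homology_excision:
  assumes "N \<subseteq> topspace X" "X closure_of V \<subseteq> X interior_of N"
    and "trivial_group (relative_homology_group k (subtopology X N) (N - V))"
  shows "inclusion_surjective_on_homology k X (topspace X - V)"
proof -
  let ?U = "topspace X - N"
  have "X closure_of ?U \<subseteq> X interior_of (topspace X - V)"
    using assms(2) closure_of_subset_topspace[of X V]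
    by (auto simp: closure_of_complement interior_of_complement)
  from homology_excision_axiom[OF this Diff_subset, of k]
  moreover have "topspace X - V - ?U = N - V" "topspace X - ?U = N"
    using assms(1) by auto
  ultimately have "hom_induced k (subtopology X N) (N - V) X (topspace X - V) id
    \<in> iso (relative_homology_group k (subtopology X N) (N - V))
          (relative_homology_group k X (topspace X - V))"
    by (simp only: subtopology_topspace)
  then have "relative_homology_group k (subtopology X N) (N - V)
      \<cong> relative_homology_group k X (topspace X - V)"
    by (rule is_isoI)
  from isomorphic_group_triviality1[OF this group_relative_homology_group assms(3)]
  show ?thesis
    by (rule inclusion_surjective_on_homology_if_trivial_relative)
qed

lemma inclusion_surjective_on_homology_excision_disjoint:
  fixes m :: nat
  assumes N_sub: "\<And>i. i < m \<Longrightarrow> N i \<subseteq> topspace X"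
    and inside: "\<And>i. i < m \<Longrightarrow> X closure_of V i \<subseteq> X interior_of N i"
    and disjoint: "\<And>i j. i < m \<Longrightarrow> j < m \<Longrightarrow> i \<noteq> j \<Longrightarrow> N i \<inter> N j = {}"
    and trivial: "\<And>i. i < m \<Longrightarrow> trivial_group (relative_homology_group k (subtopology X (N i)) (N i - V i))"
  shows "inclusion_surjective_on_homology k X (topspace X - (\<Union>i<m. V i))"
proof -
  have V_sub_N: "topspace X \<inter> V i \<subseteq> N i" if "i < m" for i
    using inside[OF that] closure_of_subset[of "topspace X \<inter> V i" X] interior_of_subset[of X "N i"]
    by (simp add: closure_of_restrict[of X "V i"])
  have "inclusion_surjective_on_homology k X (topspace X - (\<Union>i<n. V i))" if "n \<le> m" for n
    using that
  proof (induction n)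
    case 0
    then show ?case
      by (simp add: inclusion_surjective_on_homology_topspace)
  next
    case (Suc n)
    define T where "T = topspace X - (\<Union>i<n. V i)"
    let ?Y = "subtopology X T"
    have n: "n < m"
      using Suc.prems by simp
    have "N n \<inter> V i = {}" if "i < n" for i
      using disjoint[of i n] V_sub_N[of i] N_sub[OF n] that n by auto
    then have N_n_sub: "N n \<subseteq> topspace ?Y"
      using N_sub[OF n] by (auto simp: T_def)
    have "?Y closure_of V n \<subseteq> topspace ?Y \<inter> X closure_of V n"
      using closure_of_subtopology_subset closure_of_subset_topspace by fast
    also have "\<dots> \<subseteq> ?Y interior_of N n"
      using inside[OF n] interior_of_subtopology_subset[of T X "N n"] by auto
    finally have inside_n: "?Y closure_of V n \<subseteq> ?Y interior_of N n" .
    have "T \<inter> N n = N n"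
      using N_n_sub by auto
    then have "subtopology ?Y (N n) = subtopology X (N n)"
      by (simp add: subtopology_subtopology)
    then have "inclusion_surjective_on_homology k ?Y (topspace ?Y - V n)"
      using trivial[OF n] by (intro inclusion_surjective_on_homology_excision[OF N_n_sub inside_n]) simp
    moreover have "topspace ?Y - V n = topspace X - (\<Union>i<Suc n. V i)"
      by (auto simp: T_def lessThan_Suc)
    moreover have "topspace X - (\<Union>i<Suc n. V i) \<subseteq> T"
      by (auto simp: T_def lessThan_Suc)
    ultimately show ?case
      using Suc.IH n unfolding T_def by (metis inclusion_surjective_on_homology_trans less_imp_le)
  qed
  then show ?thesis
    by simp
qed

lemma (in Metric_space) closure_of_mball_subset_interior_of_mcball:
  assumes "\<rho> < R"
  shows "mtopology closure_of mball x \<rho> \<subseteq> mtopology interior_of mcball x R"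
proof -
  have "mtopology closure_of mball x \<rho> \<subseteq> mcball x \<rho>"
    by (intro closure_of_minimal mball_subset_mcball closedin_mcball)
  also have "\<dots> \<subseteq> mball x R"
    using assms by (rule mcball_subset_mball_concentric)
  also have "\<dots> \<subseteq> mtopology interior_of mcball x R"
    by (intro interior_of_maximal mball_subset_mcball openin_mball)
  finally show ?thesis .
qed

section \<open>The toroidal metric\<close>

definition integer_lattice :: "(real^'n) set" where
  "integer_lattice = {z. \<forall>i. z$i \<in> \<int>}"

lemma integer_lattice_0 [simp]: "0 \<in> integer_lattice"
  and integer_lattice_uminus: "z \<in> integer_lattice \<Longrightarrow> - z \<in> integer_lattice"
  and integer_lattice_add: "z \<in> integer_lattice \<Longrightarrow> w \<in> integer_lattice \<Longrightarrow> z + w \<in> integer_lattice"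
  and integer_lattice_diff: "z \<in> integer_lattice \<Longrightarrow> w \<in> integer_lattice \<Longrightarrow> z - w \<in> integer_lattice"
  by (auto simp: integer_lattice_def)

lemma integer_lattice_nonempty [simp]: "integer_lattice \<noteq> {}"
  using integer_lattice_0 by blast

lemma norm_ge_1_integer_lattice:
  assumes "z \<in> integer_lattice" "z \<noteq> 0"
  shows "1 \<le> norm z"
proof -
  obtain i where "z$i \<noteq> 0"
    using assms(2) by (metis vec_eq_iff zero_index)
  moreover have "z$i \<in> \<int>"
    using assms(1) by (simp add: integer_lattice_def)
  ultimately have "1 \<le> \<bar>z$i\<bar>"
    by (metis Ints_nonzero_abs_ge1)
  also have "\<dots> \<le> norm z"
    by (rule component_le_norm_cart)
  finally show ?thesis .
qed

definition frac_vec :: "real^'n \<Rightarrow> real^'n" where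
  "frac_vec v = (\<chi> i. frac (v$i))"

lemma frac_vec_in_torus_carrier: "frac_vec v \<in> torus_carrier"
  by (simp add: frac_vec_def torus_carrier_def frac_lt_1)

lemma frac_vec_minus_self: "frac_vec v - v \<in> integer_lattice"
  by (simp add: frac_vec_def integer_lattice_def frac_def)

lemma frac_vec_id: "q \<in> torus_carrier \<Longrightarrow> frac_vec q = q"
  by (simp add: frac_vec_def torus_carrier_def frac_eq vec_eq_iff)

lemma frac_vec_add_integer_lattice:
  assumes "q \<in> torus_carrier" "z \<in> integer_lattice"
  shows "frac_vec (q + z) = q"
  using assms by (simp add: frac_vec_def torus_carrier_def integer_lattice_def frac_add_int_right
      frac_eq vec_eq_iff)

lemma torus_dist_eq_Inf:
  "torus_dist x y = Inf ((\<lambda>z. norm (x - y - z)) ` integer_lattice)"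
  by (simp add: torus_dist_def integer_lattice_def)

lemma torus_dist_le_norm: "z \<in> integer_lattice \<Longrightarrow> torus_dist x y \<le> norm (x - y - z)"
  unfolding torus_dist_eq_Inf by (rule cInf_lower) (auto intro: bdd_belowI[where m=0])

lemma torus_dist_nonneg: "0 \<le> torus_dist x y"
  unfolding torus_dist_eq_Inf by (rule cInf_greatest) auto

text \<open>Two lattice translates are at distance at least 1, so a representative closer than 1/2
  realises the infimum.\<close>
lemma torus_dist_eq_norm:
  assumes "z0 \<in> integer_lattice" "norm (x - y - z0) < 1/2"
  shows "torus_dist x y = norm (x - y - z0)"
proof (rule antisym)
  show "torus_dist x y \<le> norm (x - y - z0)"
    using assms(1) by (rule torus_dist_le_norm)
  show "norm (x - y - z0) \<le> torus_dist x y"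
    unfolding torus_dist_eq_Inf
  proof (rule cInf_greatest)
    fix t assume "t \<in> (\<lambda>z. norm (x - y - z)) ` integer_lattice"
    then obtain z where z: "z \<in> integer_lattice" "t = norm (x - y - z)" by auto
    show "norm (x - y - z0) \<le> t"
    proof (cases "z = z0")
      case False
      then have "1 \<le> norm (z - z0)"
        by (simp add: norm_ge_1_integer_lattice integer_lattice_diff z(1) assms(1))
      moreover have "norm (z - z0) \<le> norm (x - y - z) + norm (x - y - z0)"
        using norm_triangle_ineq4[of "x - y - z0" "x - y - z"] by (simp add: algebra_simps)
      ultimately show ?thesis using z assms(2) by linarith
    qed (use z in simp)
  qed (use assms(1) in auto)
qed

lemma torus_dist_attained:
  assumes "torus_dist x y < 1/2"
  obtains z where "z \<in> integer_lattice" "torus_dist x y = norm (x - y - z)"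
proof -
  have "\<exists>t \<in> (\<lambda>z. norm (x - y - z)) ` integer_lattice. t < 1/2"
    using assms unfolding torus_dist_eq_Inf by (intro cInf_lessD) auto
  then obtain z where "z \<in> integer_lattice" "norm (x - y - z) < 1/2"
    by auto
  with torus_dist_eq_norm that show ?thesis by blast
qed

lemma torus_dist_commute: "torus_dist x y = torus_dist y x"
proof -
  have "(\<lambda>z. norm (y - x - z)) = (\<lambda>z. norm (x - y - z)) \<circ> uminus"
    by (simp add: fun_eq_iff norm_minus_commute algebra_simps)
  moreover have "uminus ` integer_lattice = (integer_lattice :: (real^'n) set)"
    using integer_lattice_uminus by (metis image_subsetI image_eqI minus_minus subset_antisym subsetI)
  ultimately have "(\<lambda>z. norm (y - x - z)) ` integer_lattice = (\<lambda>z. norm (x - y - z)) ` integer_lattice"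
    by (metis image_comp)
  then show ?thesis
    by (simp add: torus_dist_eq_Inf)
qed

lemma torus_dist_triangle: "torus_dist x z \<le> torus_dist x y + torus_dist y z"
proof -
  have "torus_dist x z - norm (y - z - w) \<le> norm (x - y - v)"
    if "v \<in> integer_lattice" "w \<in> integer_lattice" for v w
  proof -
    have "torus_dist x z \<le> norm ((x - y - v) + (y - z - w))"
      using torus_dist_le_norm[OF integer_lattice_add[OF that], of x z] by (simp add: algebra_simps)
    also have "\<dots> \<le> norm (x - y - v) + norm (y - z - w)"
      by (rule norm_triangle_ineq)
    finally show ?thesis by simp
  qed
  then have "torus_dist x z - norm (y - z - w) \<le> torus_dist x y" if "w \<in> integer_lattice" for w
    unfolding torus_dist_eq_Inf[of x y] using that by (intro cInf_greatest) auto
  then have "torus_dist x z - torus_dist x y \<le> torus_dist y z"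
    unfolding torus_dist_eq_Inf[of y z] by (intro cInf_greatest) force+
  then show ?thesis by simp
qed

lemma torus_dist_eq_0_iff:
  assumes "x \<in> torus_carrier" "y \<in> torus_carrier"
  shows "torus_dist x y = 0 \<longleftrightarrow> x = y"
proof
  assume 0: "torus_dist x y = 0"
  then obtain z where z: "z \<in> integer_lattice" "norm (x - y - z) = 0"
    using torus_dist_attained[of x y] by auto
  have "x = frac_vec x"
    using assms(1) by (simp add: frac_vec_id)
  also have "\<dots> = frac_vec (y + z)"
    using z(2) by (simp add: algebra_simps)
  also have "\<dots> = y"
    using assms(2) z(1) by (rule frac_vec_add_integer_lattice)
  finally show "x = y" .
qed (use torus_dist_le_norm[OF integer_lattice_0, of x x] torus_dist_nonneg[of x x] in simp)

lemma Metric_space_torus: "Metric_space torus_carrier torus_dist"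
  by unfold_locales (auto simp: torus_dist_nonneg torus_dist_commute torus_dist_eq_0_iff torus_dist_triangle)

interpretation torus: Metric_space torus_carrier torus_dist
  by (rule Metric_space_torus)

lemma torus_top_eq_mtopology: "torus_top = torus.mtopology"
  by (simp add: torus_top_def)

lemma torus_cball_eq_mcball: "torus_cball = torus.mcball"
  by (simp add: torus_cball_def fun_eq_iff)

section \<open>Euclidean charts and annuli\<close>

definition torus_chart :: "real^'n \<Rightarrow> real^'n \<Rightarrow> real^'n" where
  "torus_chart p v = frac_vec (p + v)"

lemma torus_chart_in_torus_carrier: "torus_chart p v \<in> torus_carrier"
  by (simp add: torus_chart_def frac_vec_in_torus_carrier)

lemma torus_dist_torus_chart:
  assumes "norm (v - w) < 1/2"
  shows "torus_dist (torus_chart p v) (torus_chart p w) = norm (v - w)"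
proof -
  have "(frac_vec (p + v) - (p + v)) - (frac_vec (p + w) - (p + w)) \<in> integer_lattice"
    by (intro integer_lattice_diff frac_vec_minus_self)
  from torus_dist_eq_norm[OF this] show ?thesis
    using assms by (simp add: torus_chart_def algebra_simps)
qed

lemma torus_dist_centre_torus_chart:
  assumes "p \<in> torus_carrier" "norm v < 1/2"
  shows "torus_dist p (torus_chart p v) = norm v"
  using torus_dist_torus_chart[of 0 v p] assms
  by (simp add: torus_chart_def frac_vec_id)

lemma torus_chart_image_cball:
  assumes p: "p \<in> torus_carrier" and R: "R < 1/2"
  shows "torus_chart p ` cball 0 R = torus_cball p R"
proof
  show "torus_chart p ` cball 0 R \<subseteq> torus_cball p R"
    using assms by (auto simp: torus_cball_eq_mcball torus_chart_in_torus_carrier torus_dist_centre_torus_chart)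
  show "torus_cball p R \<subseteq> torus_chart p ` cball 0 R"
  proof
    fix q assume "q \<in> torus_cball p R"
    then have q: "q \<in> torus_carrier" "torus_dist q p \<le> R"
      by (auto simp: torus_cball_eq_mcball torus_dist_commute)
    then obtain z where z: "z \<in> integer_lattice" "torus_dist q p = norm (q - p - z)"
      using R torus_dist_attained[of q p] by auto
    have "torus_chart p (q - p - z) = q"
      using frac_vec_add_integer_lattice[OF q(1) integer_lattice_uminus[OF z(1)]]
      by (simp add: torus_chart_def)
    moreover have "q - p - z \<in> cball 0 R"
      using q z by simp
    ultimately show "q \<in> torus_chart p ` cball 0 R"
      by (metis image_eqI)
  qed
qed

lemma torus_chart_image_annulus:
  assumes p: "p \<in> torus_carrier" and R: "R < 1/2"
  shows "torus_chart p ` (cball 0 R - ball 0 \<rho>) = torus_cball p R - torus.mball p \<rho>"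
proof -
  have "torus_chart p ` (cball 0 R - ball 0 \<rho>) = {x \<in> torus_chart p ` cball 0 R. \<not> torus_dist p x < \<rho>}"
    using p R by (auto simp: torus_dist_centre_torus_chart)
  then show ?thesis
    using torus_chart_image_cball[OF p R] p by (auto simp: torus_cball_eq_mcball)
qed

lemma homeomorphic_map_torus_chart:
  fixes p :: "real^'n"
  assumes p: "p \<in> torus_carrier" and R: "R < 1/4"
  shows "homeomorphic_map (top_of_set (cball 0 R)) (subtopology torus_top (torus_cball p R))
           (torus_chart p)"
proof -
  interpret ball: Submetric UNIV dist "cball (0::real^'n) R"
    by unfold_locales simp
  interpret torus_ball: Submetric torus_carrier torus_dist "torus_cball p R"
    by unfold_locales (auto simp: torus_cball_eq_mcball)
  have metrics: "Metric_space12 (cball (0::real^'n) R) dist (torus_cball p R) torus_dist"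
    by (simp add: Metric_space12_def ball.sub.Metric_space_axioms torus_ball.sub.Metric_space_axioms)
  have "homeomorphic_map ball.sub.mtopology torus_ball.sub.mtopology (torus_chart p)"
  proof (rule Metric_space12.isometry_imp_homeomorphic_map[OF metrics])
    show "torus_chart p ` cball 0 R = torus_cball p R"
      using p R by (simp add: torus_chart_image_cball)
    fix v w :: "real^'n" assume "v \<in> cball 0 R" "w \<in> cball 0 R"
    then have "norm (v - w) < 1/2"
      using R norm_triangle_ineq4[of v w] by simp
    then show "torus_dist (torus_chart p v) (torus_chart p w) = dist v w"
      by (simp add: torus_dist_torus_chart dist_norm)
  qed
  then show ?thesis
    by (simp add: ball.mtopology_submetric torus_ball.mtopology_submetric torus_top_eq_mtopology)
qed

lemma annulus_homotopy_eqv_sphere: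
  fixes a :: "'a::euclidean_space"
  assumes "0 < \<rho>" "\<rho> \<le> R"
  shows "(cball a R - ball a \<rho>) homotopy_eqv sphere a \<rho>" (is "?A homotopy_eqv _")
proof (rule deformation_retract_imp_homotopy_eqv)
  define r where "r x = a + (\<rho> / dist a x) *\<^sub>R (x - a)" for x
  have dist_pos: "0 < dist a x" if "x \<in> ?A" for x
    using that assms by auto
  have cont: "continuous_on ?A r"
    unfolding r_def by (intro continuous_intros) (use dist_pos in auto)
  show "retraction ?A (sphere a \<rho>) r"
    using cont dist_pos assms by (auto simp: retraction_def r_def dist_norm norm_minus_commute)
  have "closed_segment x (r x) \<subseteq> ?A" if "x \<in> ?A" for x
  proof
    fix y assume "y \<in> closed_segment x (r x)"
    then obtain u where u: "0 \<le> u" "u \<le> 1" "y = (1 - u) *\<^sub>R x + u *\<^sub>R r x"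
      by (auto simp: closed_segment_def)
    define c where "c = (1 - u) + u * \<rho> / dist a x"
    have "a - y = c *\<^sub>R (a - x)"
      using u(3) by (simp add: c_def r_def algebra_simps)
    moreover have "0 \<le> c"
      using u assms dist_pos[OF that] by (simp add: c_def)
    ultimately have "dist a y = c * dist a x"
      by (simp add: dist_norm)
    also have "\<dots> = (1 - u) * dist a x + u * \<rho>"
      using dist_pos[OF that] by (simp add: c_def field_simps)
    finally have "dist a y = (1 - u) * dist a x + u * \<rho>" .
    moreover have "\<rho> \<le> dist a x" "dist a x \<le> R"
      using that by auto
    ultimately have "\<rho> \<le> dist a y" "dist a y \<le> R"
      using u(1,2) assms mult_left_mono[of \<rho> "dist a x" "1 - u"] mult_left_mono[of "dist a x" R "1 - u"]
        mult_left_mono[of \<rho> R u] by (simp_all add: algebra_simps)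
    then show "y \<in> ?A"
      by simp
  qed
  then show "homotopic_with_canon (\<lambda>x. True) ?A ?A id r"
    by (intro homotopic_with_linear continuous_on_id cont) auto
qed

lemma sphere_homotopy_equivalent_nsphere:
  fixes a :: "'a::euclidean_space"
  assumes "0 < \<rho>"
  shows "top_of_set (sphere a \<rho>) homotopy_equivalent_space nsphere (DIM('a) - 1)"
proof -
  obtain f :: "(nat \<Rightarrow> real) \<Rightarrow> 'a" and g
    where "homeomorphic_maps (nsphere (DIM('a) - 1)) (top_of_set (sphere 0 1)) f g"
    using homeomorphic_maps_nsphere_euclidean_sphere[of "Basis :: 'a set" "DIM('a)"]
    by (simp add: independent_Basis orthogonal_Basis span_Basis) blast
  then have "top_of_set (sphere (0::'a) 1) homotopy_equivalent_space nsphere (DIM('a) - 1)"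
    by (meson homeomorphic_space_def homeomorphic_imp_homotopy_equivalent_space homeomorphic_space_sym)
  moreover have "top_of_set (sphere a \<rho>) homotopy_equivalent_space top_of_set (sphere (0::'a) 1)"
    using assms by (simp add: homeomorphic_imp_homotopy_eqv homeomorphic_spheres)
  ultimately show ?thesis
    by (metis homotopy_eqv_trans)
qed

lemma trivial_relative_homology_cball_annulus:
  fixes a :: "'a::euclidean_space"
  assumes "0 < \<rho>" "\<rho> \<le> R" "k \<noteq> int DIM('a)"
  shows "trivial_group (relative_homology_group k (top_of_set (cball a R)) (cball a R - ball a \<rho>))"
proof -
  let ?A = "cball a R - ball a \<rho>"
  have "sphere a R \<subseteq> ?A" "sphere a R \<noteq> {}"
    using assms by auto
  then have nonempty: "topspace (top_of_set (cball a R)) \<inter> ?A \<noteq> {}"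
    by (metis Diff_subset Int_absorb1 subset_empty topspace_euclidean_subtopology)
  have "top_of_set ?A homotopy_equivalent_space nsphere (DIM('a) - 1)"
    using homotopy_eqv_trans[OF annulus_homotopy_eqv_sphere sphere_homotopy_equivalent_nsphere] assms
    by blast
  moreover have "trivial_group (reduced_homology_group (k - 1) (nsphere (DIM('a) - 1)))"
    using assms(3) by (simp add: trivial_reduced_homology_group_nsphere of_nat_diff)
  ultimately have "trivial_group (reduced_homology_group (k - 1) (top_of_set ?A))"
    using isomorphic_group_triviality[OF homotopy_equivalent_space_imp_isomorphic_reduced_homology_groups
        group_reduced_homology_group group_reduced_homology_group] by blast
  moreover have "relative_homology_group k (top_of_set (cball a R)) ?A
      \<cong> reduced_homology_group (k - 1) (top_of_set ?A)"
    using isomorphic_group_relative_homology_of_contractible[OF _ nonempty]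
    by (simp add: convex_imp_contractible subtopology_subtopology Int_absorb1 Diff_subset)
  ultimately show ?thesis
    using isomorphic_group_triviality[OF _ group_relative_homology_group group_reduced_homology_group]
    by blast
qed

lemma trivial_relative_homology_torus_cball_annulus:
  fixes p :: "real^'n"
  assumes "p \<in> torus_carrier" "0 < \<rho>" "\<rho> \<le> R" "R < 1/4" "k \<noteq> int CARD('n)"
  shows "trivial_group (relative_homology_group k (subtopology torus_top (torus_cball p R))
           (torus_cball p R - torus.mball p \<rho>))"
proof -
  have "hom_induced k (top_of_set (cball 0 R)) (cball 0 R - ball 0 \<rho>)
          (subtopology torus_top (torus_cball p R)) (torus_cball p R - torus.mball p \<rho>) (torus_chart p)
      \<in> iso (relative_homology_group k (top_of_set (cball 0 R)) (cball 0 R - ball 0 \<rho>))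
            (relative_homology_group k (subtopology torus_top (torus_cball p R))
              (torus_cball p R - torus.mball p \<rho>))"
    using assms by (intro homeomorphic_map_relative_homology_iso homeomorphic_map_torus_chart
        torus_chart_image_annulus) auto
  then have "relative_homology_group k (top_of_set (cball (0::real^'n) R)) (cball 0 R - ball 0 \<rho>)
      \<cong> relative_homology_group k (subtopology torus_top (torus_cball p R)) (torus_cball p R - torus.mball p \<rho>)"
    by (rule is_isoI)
  moreover have "trivial_group (relative_homology_group k (top_of_set (cball (0::real^'n) R)) (cball 0 R - ball 0 \<rho>))"
    using assms by (intro trivial_relative_homology_cball_annulus) auto
  ultimately show ?thesis
    using isomorphic_group_triviality[OF _ group_relative_homology_group group_relative_homology_group]
    by blast
qed

theorem mainTheorem16:
  fixes S :: "(real^'n) set" and p :: "nat \<Rightarrow> real^'n" and M :: nat and r :: real and k :: int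
  assumes dim: "CARD('n) \<ge> 2"
    and S_closed: "closedin torus_top S"
    and p_in: "\<And>i. i < M \<Longrightarrow> p i \<in> torus_carrier"
    and r_pos: "0 < r" and r_small: "r < 1/8"
    and disj: "\<And>i j. i < M \<Longrightarrow> j < M \<Longrightarrow> i \<noteq> j \<Longrightarrow>
                 torus_cball (p i) (2*r) \<inter> torus_cball (p j) (2*r) = {}"
    and cover: "torus_top closure_of (torus_carrier - S) \<subseteq> (\<Union>i<M. torus_cball (p i) r)"
    and k: "1 \<le> k" "k \<le> int CARD('n) - 1"
  shows "hom_induced k (subtopology torus_top S) {} torus_top {} id
           ` carrier (homology_group k (subtopology torus_top S))
         = carrier (homology_group k torus_top)"
proof -
  define \<rho> where "\<rho> = 3/2 * r"
  have radii: "r < \<rho>" "0 < \<rho>" "\<rho> < 2 * r" "2 * r < 1/4"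
    using r_pos r_small by (auto simp: \<rho>_def)
  let ?T = "topspace torus_top - (\<Union>i<M. torus.mball (p i) \<rho>)"
  have "inclusion_surjective_on_homology k torus_top ?T"
  proof (rule inclusion_surjective_on_homology_excision_disjoint)
    fix i assume i: "i < M"
    show "torus_cball (p i) (2 * r) \<subseteq> topspace torus_top"
      by (simp add: torus_top_eq_mtopology torus_cball_eq_mcball torus.mcball_subset_mspace)
    show "torus_top closure_of torus.mball (p i) \<rho> \<subseteq> torus_top interior_of torus_cball (p i) (2 * r)"
      using radii by (simp add: torus_top_eq_mtopology torus_cball_eq_mcball
          torus.closure_of_mball_subset_interior_of_mcball)
    show "trivial_group (relative_homology_group k (subtopology torus_top (torus_cball (p i) (2 * r)))
        (torus_cball (p i) (2 * r) - torus.mball (p i) \<rho>))"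
      using p_in[OF i] radii k(2) by (intro trivial_relative_homology_torus_cball_annulus) auto
  qed (rule disj)
  moreover have "?T \<subseteq> S"
    using cover closure_of_subset[of "torus_carrier - S" torus_top] radii(1)
      torus.mcball_subset_mball_concentric[of r \<rho>]
    by (fastforce simp: torus_top_eq_mtopology torus_cball_eq_mcball)
  ultimately have "inclusion_surjective_on_homology k torus_top S"
    by (rule inclusion_surjective_on_homology_mono[rotated])
  then show ?thesis
    by (simp add: inclusion_surjective_on_homology_def)
qed

end
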